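(* Let $\lambda_1,\lambda_2,\sigma_1,\sigma_2\in\mathbb{C}^*$ and $\eta_1,\eta_2\in\mathbb{C}$. Suppose that $V$ is a nonzero $\mathcal{G}$-submodule of the tensor product module $\Omega(\lambda_1,\eta_1,\sigma_1,0)\otimes\Omega(\lambda_2,\eta_2,0,\sigma_2)$. Then $1\otimes 1\in V$.
   Context: The planar Galilean conformal algebra $\mathcal{G}$ is the complex Lie algebra with basis $\{L_m,H_m,I_m,J_m\mid m\in\mathbb{Z}\}$ and brackets $[L_m,L_n]=(n-m)L_{m+n}$, $[L_m,H_n]=nH_{m+n}$, $[L_m,I_n]=(n-m)I_{m+n}$, $[L_m,J_n]=(n-m)J_{m+n}$, $[H_m,I_n]=I_{m+n}$, $[H_m,J_n]=-J_{m+n}$, and $[H_m,H_n]=[I_m,I_n]=[J_m,J_n]=[I_m,J_n]=0$ for all $m,n\in\mathbb{Z}$. For $\lambda,\sigma\in\mathbb{C}^*$, $\eta\in\mathbb{C}$, the module $\Omega(\lambda,\eta,\sigma,0)$ is $\mathbb{C}[X,Y]$ with $L_m f(X,Y)=\lambda^m(Y-mX+m\eta)f(X,Y-m)$, $H_m f(X,Y)=\lambda^m X f(X,Y-m)$, $I_m f(X,Y)=\lambda^m\sigma f(X-1,Y-m)$, $J_m f(X,Y)=0$. The module $\Omega(\lambda,\eta,0,\sigma)$ is $\mathbb{C}[S,T]$ with $L_m f(S,T)=\lambda^m(T+mS+m\eta)f(S,T-m)$, $H_m f(S,T)=\lambda^m S f(S,T-m)$, $I_m f(S,T)=0$, $J_m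 f(S,T)=\lambda^m\sigma f(S+1,T-m)$. The tensor product of $\mathcal{G}$-modules has action $x(v\otimes w)=xv\otimes w+v\otimes xw$. *)

theory Defs
  imports Complex_Main
begin

text \<open>Polynomials in two variables are represented by their polynomial functions
  \<open>complex \<Rightarrow> complex \<Rightarrow> complex\<close>; the tensor product
  \<open>C[X,Y] \<otimes> C[S,T]\<close> is identified with \<open>C[X,Y,S,T]\<close>, represented
  by polynomial functions in four variables (via \<open>f \<otimes> g \<mapsto> f(X,Y) g(S,T)\<close>).
  Since C is infinite, polynomials and polynomial functions correspond bijectively.\<close>

type_synonym pf4 = "complex \<Rightarrow> complex \<Rightarrow> complex \<Rightarrow> complex \<Rightarrow> complex"

definition poly4 :: "pf4 set" where
  "poly4 = {F. \<exists>A c. finite A \<and>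
     F = (\<lambda>x y s t. \<Sum>(a,b,d,e)\<in>A. c (a,b,d,e) * x ^ a * y ^ b * s ^ d * t ^ e)}"

definition OmA_L :: "complex \<Rightarrow> complex \<Rightarrow> int \<Rightarrow> (complex \<Rightarrow> complex \<Rightarrow> complex) \<Rightarrow> complex \<Rightarrow> complex \<Rightarrow> complex" where
  "OmA_L lam eta m f = (\<lambda>x y. lam powi m * (y - of_int m * x + of_int m * eta) * f x (y - of_int m))"
definition OmA_H :: "complex \<Rightarrow> int \<Rightarrow> (complex \<Rightarrow> complex \<Rightarrow> complex) \<Rightarrow> complex \<Rightarrow> complex \<Rightarrow> complex" where
  "OmA_H lam m f = (\<lambda>x y. lam powi m * x * f x (y - of_int m))"
definition OmA_I :: "complex \<Rightarrow> complex \<Rightarrow> int \<Rightarrow> (complex \<Rightarrow> complex \<Rightarrow> complex) \<Rightarrow> complex \<Rightarrow> complex \<Rightarrow> complex" where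
  "OmA_I lam sig m f = (\<lambda>x y. lam powi m * sig * f (x - 1) (y - of_int m))"
definition OmA_J :: "int \<Rightarrow> (complex \<Rightarrow> complex \<Rightarrow> complex) \<Rightarrow> complex \<Rightarrow> complex \<Rightarrow> complex" where
  "OmA_J m f = (\<lambda>x y. 0)"

definition OmB_L :: "complex \<Rightarrow> complex \<Rightarrow> int \<Rightarrow> (complex \<Rightarrow> complex \<Rightarrow> complex) \<Rightarrow> complex \<Rightarrow> complex \<Rightarrow> complex" where
  "OmB_L lam eta m f = (\<lambda>s t. lam powi m * (t + of_int m * s + of_int m * eta) * f s (t - of_int m))"
definition OmB_H :: "complex \<Rightarrow> int \<Rightarrow> (complex \<Rightarrow> complex \<Rightarrow> complex) \<Rightarrow> complex \<Rightarrow> complex \<Rightarrow> complex" where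
  "OmB_H lam m f = (\<lambda>s t. lam powi m * s * f s (t - of_int m))"
definition OmB_I :: "int \<Rightarrow> (complex \<Rightarrow> complex \<Rightarrow> complex) \<Rightarrow> complex \<Rightarrow> complex \<Rightarrow> complex" where
  "OmB_I m f = (\<lambda>s t. 0)"
definition OmB_J :: "complex \<Rightarrow> complex \<Rightarrow> int \<Rightarrow> (complex \<Rightarrow> complex \<Rightarrow> complex) \<Rightarrow> complex \<Rightarrow> complex \<Rightarrow> complex" where
  "OmB_J lam sig m f = (\<lambda>s t. lam powi m * sig * f (s + 1) (t - of_int m))"

text \<open>Tensor action \<open>x(v \<otimes> w) = xv \<otimes> w + v \<otimes> xw\<close>, extended linearly:
  the first operator acts on the variables X,Y, the second on S,T.\<close>
definition tens :: "((complex \<Rightarrow> complex \<Rightarrow> complex) \<Rightarrow> complex \<Rightarrow> complex \<Rightarrow> complex)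
   \<Rightarrow> ((complex \<Rightarrow> complex \<Rightarrow> complex) \<Rightarrow> complex \<Rightarrow> complex \<Rightarrow> complex) \<Rightarrow> pf4 \<Rightarrow> pf4" where
  "tens P Q F = (\<lambda>x y s t. P (\<lambda>x' y'. F x' y' s t) x y + Q (\<lambda>s' t'. F x y s' t') s t)"

definition is_submodule :: "complex \<Rightarrow> complex \<Rightarrow> complex \<Rightarrow> complex \<Rightarrow> complex \<Rightarrow> complex \<Rightarrow> pf4 set \<Rightarrow> bool" where
  "is_submodule l1 e1 s1 l2 e2 s2 V \<longleftrightarrow>
     V \<subseteq> poly4 \<and> (\<lambda>x y s t. 0) \<in> V \<and>
     (\<forall>F\<in>V. \<forall>G\<in>V. (\<lambda>x y s t. F x y s t + G x y s t) \<in> V) \<and>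
     (\<forall>F\<in>V. \<forall>c::complex. (\<lambda>x y s t. c * F x y s t) \<in> V) \<and>
     (\<forall>F\<in>V. \<forall>m::int.
        tens (OmA_L l1 e1 m) (OmB_L l2 e2 m) F \<in> V \<and>
        tens (OmA_H l1 m) (OmB_H l2 m) F \<in> V \<and>
        tens (OmA_I l1 s1 m) (OmB_I m) F \<in> V \<and>
        tens (OmA_J m) (OmB_J l2 s2 m) F \<in> V)"

end

theory Submission
  imports Defs "HOL-Computational_Algebra.Polynomial"
begin

(* On C[X,Y,S,T], the operators I_0, I_1 act as nonzero multiples of the translations of (X,Y)
   by (-1,0) and (-1,-1), and J_0, J_1 as nonzero multiples of the translations of (S,T) by
   (1,0) and (1,-1). So V is closed under the four corresponding finite differences, and each of
   them lowers the total degree of a nonzero polynomial. Differencing a nonzero element of V for as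
   long as some difference is nonzero therefore ends in a nonzero element of V invariant under all
   four translations. A polynomial periodic along a line is constant on it, and the four
   translation vectors span C^4, so this element is a nonzero constant. *)

lemma poly_periodic_const:
  fixes p :: "'a::{idom,ring_char_0} poly"
  assumes periodic: "\<And>z. poly p (z + 1) = poly p z"
  shows "poly p z = poly p 0"
proof -
  define q where "q = p - [:poly p 0:]"
  have "poly q (of_nat n) = 0" for n
  proof (induction n)
    case (Suc n)
    then show ?case using periodic[of "of_nat n"] by (simp add: q_def add.commute)
  qed (simp add: q_def)
  then have "range of_nat \<subseteq> {x. poly q x = 0}" by auto
  moreover have "infinite (range (of_nat :: nat \<Rightarrow> 'a))"
    by (simp add: range_inj_infinite inj_of_nat)
  ultimately have "q = 0" using poly_roots_finite finite_subset by blast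
  then have "poly q z = 0" by simp
  then show ?thesis by (simp add: q_def)
qed

(* Polynomial functions of total degree below k. Generating them with affine rather than linear
   factors makes closure under translation a one-case induction. *)
inductive deg_less :: "nat \<Rightarrow> pf4 \<Rightarrow> bool" where
  zero: "deg_less k (\<lambda>x y s t. 0)"
| const: "deg_less (Suc k) (\<lambda>x y s t. c)"
| add: "deg_less k F \<Longrightarrow> deg_less k G \<Longrightarrow> deg_less k (\<lambda>x y s t. F x y s t + G x y s t)"
| mult_affine: "deg_less k F \<Longrightarrow>
    deg_less (Suc k) (\<lambda>x y s t. (a * x + b * y + c * s + d * t + e) * F x y s t)"

lemma deg_less_0_imp_zero: "deg_less 0 F \<Longrightarrow> F = (\<lambda>x y s t. 0)"
  by (induction "0::nat" F rule: deg_less.induct) auto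

lemma deg_less_Suc: "deg_less k F \<Longrightarrow> deg_less (Suc k) F"
  by (induction rule: deg_less.induct) (auto intro: deg_less.intros)

lemma deg_less_mono:
  assumes "deg_less k F" and "k \<le> j"
  shows "deg_less j F"
  using assms(2,1) by (induction j rule: dec_induct) (auto intro: deg_less_Suc)

lemma deg_less_scale: "deg_less k F \<Longrightarrow> deg_less k (\<lambda>x y s t. c * F x y s t)"
proof (induction rule: deg_less.induct)
  case (add k F G)
  then show ?case using deg_less.add[OF add.IH] by (simp add: distrib_left)
next
  case (mult_affine k F a b c' d e)
  then show ?case using deg_less.mult_affine[OF mult_affine.IH] by (simp add: mult.left_commute)
qed (auto intro: deg_less.intros)

lemma deg_less_mult:
  "deg_less k F \<Longrightarrow> deg_less j G \<Longrightarrow> deg_less (k + j) (\<lambda>x y s t. F x y s t * G x y s t)"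
proof (induction rule: deg_less.induct)
  case (const k c)
  then show ?case by (auto intro: deg_less_mono deg_less_scale)
next
  case (add k F G')
  then show ?case using deg_less.add[OF add.IH] by (simp add: distrib_right)
next
  case (mult_affine k F a b c d e)
  then show ?case using deg_less.mult_affine[OF mult_affine.IH] by (simp add: mult.assoc)
qed (auto intro: deg_less.intros)

lemma deg_less_power: "deg_less k F \<Longrightarrow> deg_less (Suc (n * k)) (\<lambda>x y s t. F x y s t ^ n)"
  by (induction n) (auto dest: deg_less_mult intro: deg_less.const[where c = 1])

lemma deg_less_affine: "deg_less 2 (\<lambda>x y s t. a * x + b * y + c * s + d * t + e)"
  using deg_less.mult_affine[OF deg_less.const[of 0 1]] by (simp add: numeral_2_eq_2)

lemma deg_less_sum:
  assumes "finite A" and "\<And>i. i \<in> A \<Longrightarrow> \<exists>k. deg_less k (f i)"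
  shows "\<exists>k. deg_less k (\<lambda>x y s t. \<Sum>i\<in>A. f i x y s t)"
  using assms
proof (induction A rule: finite_induct)
  case empty
  then show ?case using deg_less.zero by auto
next
  case (insert i A)
  then obtain k j where "deg_less k (f i)" "deg_less j (\<lambda>x y s t. \<Sum>i\<in>A. f i x y s t)"
    by blast
  then have "deg_less (max k j) (\<lambda>x y s t. f i x y s t + (\<Sum>i\<in>A. f i x y s t))"
    by (intro deg_less.add) (auto elim: deg_less_mono)
  then show ?case using insert by auto
qed

lemma poly4_imp_deg_less:
  assumes "F \<in> poly4"
  shows "\<exists>k. deg_less k F"
proof -
  obtain A c where A: "finite A"
    and F: "F = (\<lambda>x y s t. \<Sum>(a,b,d,e)\<in>A. c (a,b,d,e) * x ^ a * y ^ b * s ^ d * t ^ e)"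
    using assms unfolding poly4_def by blast
  have var: "deg_less 2 (\<lambda>x y s t. x)" "deg_less 2 (\<lambda>x y s t. y)"
    "deg_less 2 (\<lambda>x y s t. s)" "deg_less 2 (\<lambda>x y s t. t)"
    using deg_less_affine[of 1 0 0 0 0] deg_less_affine[of 0 1 0 0 0]
      deg_less_affine[of 0 0 1 0 0] deg_less_affine[of 0 0 0 1 0] by simp_all
  have "\<exists>k. deg_less k (\<lambda>x y s t. c (a,b,d,e) * x ^ a * y ^ b * s ^ d * t ^ e)" for a b d e
    by (rule exI) (rule deg_less_mult deg_less_power deg_less.const var)+
  then show ?thesis
    unfolding F by (intro deg_less_sum[OF A]) auto
qed

fun translate :: "complex \<times> complex \<times> complex \<times> complex \<Rightarrow> pf4 \<Rightarrow> pf4" where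
  "translate (a, b, c, d) F = (\<lambda>x y s t. F (x + a) (y + b) (s + c) (t + d))"

definition difference :: "complex \<times> complex \<times> complex \<times> complex \<Rightarrow> pf4 \<Rightarrow> pf4" where
  "difference h F = (\<lambda>x y s t. translate h F x y s t - F x y s t)"

lemma deg_less_translate: "deg_less k F \<Longrightarrow> deg_less k (translate h F)"
proof (induction rule: deg_less.induct)
  case (add k F G)
  then show ?case by (cases h) (auto dest: deg_less.add)
next
  case (mult_affine k F a b c d e)
  obtain a' b' c' d' where h: "h = (a', b', c', d')" by (cases h)
  from deg_less.mult_affine[OF mult_affine.IH, of a b c d "e + a * a' + b * b' + c * c' + d * d'"]
  show ?case by (simp add: h algebra_simps)
qed (cases h; auto intro: deg_less.intros)+

lemma deg_less_difference: "deg_less n F \<Longrightarrow> deg_less (n - 1) (difference h F)"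
proof (induction rule: deg_less.induct)
  case (add k F G)
  then show ?case using deg_less.add[OF add.IH] by (cases h) (simp add: difference_def algebra_simps)
next
  case (mult_affine k F a b c d e)
  obtain a' b' c' d' where h: "h = (a', b', c', d')" by (cases h)
  show ?case
  proof (cases k)
    case 0
    then show ?thesis using deg_less_0_imp_zero[of F] mult_affine.hyps
      by (simp add: difference_def h deg_less.zero)
  next
    case (Suc j)
    \<comment> \<open>Leibniz rule: \<open>\<Delta>(\<ell>F) = \<ell> \<Delta>F + \<Delta>\<ell> \<cdot> F(\<cdot> + h)\<close> with \<open>\<Delta>\<ell>\<close> constant.\<close>
    have "deg_less k (\<lambda>x y s t. (a * x + b * y + c * s + d * t + e) * difference h F x y s t
        + (a * a' + b * b' + c * c' + d * d') * translate h F x y s t)"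
      using mult_affine Suc
      by (intro deg_less.add deg_less.mult_affine[where k = j, simplified Suc[symmetric]]
          deg_less_scale deg_less_translate) auto
    then show ?thesis by (simp add: difference_def h algebra_simps)
  qed
qed (cases h; simp add: difference_def deg_less.zero)+

lemma deg_less_restrict_line:
  "deg_less k F \<Longrightarrow> \<exists>p. \<forall>z. F (x + z * a) (y + z * b) (s + z * c) (t + z * d) = poly p z"
proof (induction rule: deg_less.induct)
  case (zero k)
  then show ?case by (intro exI[of _ 0]) simp
next
  case (const k c')
  then show ?case by (intro exI[of _ "[:c':]"]) simp
next
  case (add k F G)
  then obtain p q where "\<forall>z. F (x + z * a) (y + z * b) (s + z * c) (t + z * d) = poly p z"
    and "\<forall>z. G (x + z * a) (y + z * b) (s + z * c) (t + z * d) = poly q z"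
    by blast
  then show ?case by (intro exI[of _ "p + q"]) simp
next
  case (mult_affine k F a' b' c' d' e)
  then obtain p where "\<forall>z. F (x + z * a) (y + z * b) (s + z * c) (t + z * d) = poly p z"
    by blast
  then show ?case
    by (intro exI[of _ "[:a' * x + b' * y + c' * s + d' * t + e, a' * a + b' * b + c' * c + d' * d:] * p"])
      (simp add: algebra_simps)
qed

lemma translate_invariant_line:
  assumes "deg_less k F" and invariant: "translate (a, b, c, d) F = F"
  shows "F (x + z * a) (y + z * b) (s + z * c) (t + z * d) = F x y s t"
proof -
  obtain p where p: "\<And>z. F (x + z * a) (y + z * b) (s + z * c) (t + z * d) = poly p z"
    using deg_less_restrict_line[OF assms(1)] by blast
  have step: "F (x' + a) (y' + b) (s' + c) (t' + d) = F x' y' s' t'" for x' y' s' t'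
    using fun_cong[OF fun_cong[OF fun_cong[OF fun_cong[OF invariant, of x'], of y'], of s'], of t']
    by simp
  have "poly p (w + 1) = poly p w" for w
    using step[of "x + w * a" "y + w * b" "s + w * c" "t + w * d"]
    by (simp add: p[symmetric] algebra_simps)
  then have "poly p z = poly p 0" by (rule poly_periodic_const)
  then show ?thesis by (simp add: p[symmetric])
qed

lemma translate_invariant_imp_const:
  assumes "deg_less k F"
    and "translate (-1, 0, 0, 0) F = F" "translate (-1, -1, 0, 0) F = F"
    and "translate (0, 0, 1, 0) F = F" "translate (0, 0, 1, -1) F = F"
  shows "F = (\<lambda>x y s t. F 0 0 0 0)"
proof (intro ext)
  fix x y s t
  have "F x y s t = F (x - y) 0 s t"
    using translate_invariant_line[OF assms(1,3), of x y y s t] by simp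
  also have "\<dots> = F 0 0 s t"
    using translate_invariant_line[OF assms(1,2), of "x - y" "x - y" 0 s t] by simp
  also have "\<dots> = F 0 0 (s + t) 0"
    using translate_invariant_line[OF assms(1,5), of 0 t 0 s t] by simp
  also have "\<dots> = F 0 0 0 0"
    using translate_invariant_line[OF assms(1,4), of 0 "- (s + t)" 0 "s + t" 0] by simp
  finally show "F x y s t = F 0 0 0 0" .
qed

lemma exists_translate_invariant:
  assumes "deg_less n F" "F \<in> V" "F \<noteq> (\<lambda>x y s t. 0)"
    and closed: "\<And>G h. G \<in> V \<Longrightarrow> h \<in> H \<Longrightarrow> difference h G \<in> V"
  shows "\<exists>G\<in>V. G \<noteq> (\<lambda>x y s t. 0) \<and> deg_less n G \<and> (\<forall>h\<in>H. translate h G = G)"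
  using assms(1-3)
proof (induction n arbitrary: F)
  case 0
  then show ?case using deg_less_0_imp_zero by blast
next
  case (Suc n)
  show ?case
  proof (cases "\<exists>h\<in>H. difference h F \<noteq> (\<lambda>x y s t. 0)")
    case True
    then obtain h where h: "h \<in> H" "difference h F \<noteq> (\<lambda>x y s t. 0)" by blast
    have "deg_less n (difference h F)"
      using deg_less_difference[OF Suc.prems(1)] by simp
    moreover have "difference h F \<in> V" using closed[OF Suc.prems(2) h(1)] .
    ultimately obtain G where "G \<in> V" "G \<noteq> (\<lambda>x y s t. 0)" "deg_less n G"
      "\<forall>h\<in>H. translate h G = G"
      using Suc.IH h(2) by blast
    then show ?thesis by (blast intro: deg_less_Suc)
  next
    case False
    have "translate h F = F" if "h \<in> H" for h
    proof -
      from False that have "difference h F = (\<lambda>x y s t. 0)" by blast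
      then show ?thesis by (simp add: difference_def fun_eq_iff)
    qed
    then show ?thesis using Suc.prems by blast
  qed
qed

lemma submoduleD:
  assumes "is_submodule l1 e1 s1 l2 e2 s2 V"
  shows "V \<subseteq> poly4" and "(\<lambda>x y s t. 0) \<in> V"
    and "\<And>F G. F \<in> V \<Longrightarrow> G \<in> V \<Longrightarrow> (\<lambda>x y s t. F x y s t + G x y s t) \<in> V"
    and "\<And>F c. F \<in> V \<Longrightarrow> (\<lambda>x y s t. c * F x y s t) \<in> V"
    and "\<And>F m. F \<in> V \<Longrightarrow> tens (OmA_I l1 s1 m) (OmB_I m) F \<in> V"
    and "\<And>F m. F \<in> V \<Longrightarrow> tens (OmA_J m) (OmB_J l2 s2 m) F \<in> V"
  using assms by (simp_all add: is_submodule_def)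

lemma submodule_translate_I:
  assumes "is_submodule l1 e1 s1 l2 e2 s2 V" "l1 \<noteq> 0" "s1 \<noteq> 0" "F \<in> V"
  shows "translate (-1, - of_int m, 0, 0) F \<in> V"
proof -
  have "(\<lambda>x y s t. inverse (l1 powi m * s1) * tens (OmA_I l1 s1 m) (OmB_I m) F x y s t) \<in> V"
    using assms(4) by (intro submoduleD[OF assms(1)])
  moreover have "(\<lambda>x y s t. inverse (l1 powi m * s1) * tens (OmA_I l1 s1 m) (OmB_I m) F x y s t)
      = translate (-1, - of_int m, 0, 0) F"
    using assms(2,3) by (simp add: tens_def OmA_I_def OmB_I_def fun_eq_iff field_simps)
  ultimately show ?thesis by simp
qed

lemma submodule_translate_J:
  assumes "is_submodule l1 e1 s1 l2 e2 s2 V" "l2 \<noteq> 0" "s2 \<noteq> 0" "F \<in> V"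
  shows "translate (0, 0, 1, - of_int m) F \<in> V"
proof -
  have "(\<lambda>x y s t. inverse (l2 powi m * s2) * tens (OmA_J m) (OmB_J l2 s2 m) F x y s t) \<in> V"
    using assms(4) by (intro submoduleD[OF assms(1)])
  moreover have "(\<lambda>x y s t. inverse (l2 powi m * s2) * tens (OmA_J m) (OmB_J l2 s2 m) F x y s t)
      = translate (0, 0, 1, - of_int m) F"
    using assms(2,3) by (simp add: tens_def OmA_J_def OmB_J_def fun_eq_iff field_simps)
  ultimately show ?thesis by simp
qed

lemma submodule_difference:
  assumes "is_submodule l1 e1 s1 l2 e2 s2 V" "l1 \<noteq> 0" "l2 \<noteq> 0" "s1 \<noteq> 0" "s2 \<noteq> 0"
    and "F \<in> V" "h \<in> {(-1, 0, 0, 0), (-1, -1, 0, 0), (0, 0, 1, 0), (0, 0, 1, -1)}"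
  shows "difference h F \<in> V"
proof -
  have "translate h F \<in> V"
    using assms(7) submodule_translate_I[OF assms(1,2,4,6), of 0]
      submodule_translate_I[OF assms(1,2,4,6), of 1]
      submodule_translate_J[OF assms(1,3,5,6), of 0]
      submodule_translate_J[OF assms(1,3,5,6), of 1]
    by auto
  then have "(\<lambda>x y s t. translate h F x y s t + (- 1) * F x y s t) \<in> V"
    using assms(6) by (intro submoduleD[OF assms(1)])
  then show ?thesis by (simp add: difference_def)
qed

theorem lemma3p1:
  fixes l1 l2 s1 s2 e1 e2 :: complex and V :: "pf4 set"
  assumes "l1 \<noteq> 0" and "l2 \<noteq> 0" and "s1 \<noteq> 0" and "s2 \<noteq> 0"
    and "is_submodule l1 e1 s1 l2 e2 s2 V"
    and "V \<noteq> {\<lambda>x y s t. 0}"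
  shows "(\<lambda>x y s t. 1) \<in> V"
proof -
  obtain F where F: "F \<in> V" "F \<noteq> (\<lambda>x y s t. 0)"
    using assms(6) submoduleD(2)[OF assms(5)] by blast
  then obtain k where "deg_less k F"
    using submoduleD(1)[OF assms(5)] poly4_imp_deg_less by blast
  from exists_translate_invariant[OF this F submodule_difference[OF assms(5,1-4)]]
  obtain G where G: "G \<in> V" "G \<noteq> (\<lambda>x y s t. 0)" "deg_less k G"
    and invariant: "\<forall>h\<in>{(-1, 0, 0, 0), (-1, -1, 0, 0), (0, 0, 1, 0), (0, 0, 1, -1)}. translate h G = G"
    by blast
  define c where "c = G 0 0 0 0"
  have G_const: "G = (\<lambda>x y s t. c)"
    unfolding c_def using G(3) invariant by (intro translate_invariant_imp_const) auto
  with G(2) have "c \<noteq> 0" by auto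
  have "(\<lambda>x y s t. inverse c * G x y s t) \<in> V"
    using G(1) by (rule submoduleD(4)[OF assms(5)])
  with \<open>c \<noteq> 0\<close> show ?thesis by (simp add: G_const)
qed

end
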